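(* Let $\tau(\mathbb{P}^n)\to\mathbb{P}^n$ be the bundle of unit tangent vectors of $\mathbb{P}^n$ (for the Fubini–Study metric), with fiber $S^{2n-1}$. There is a fiberwise homotopy equivalence over $\mathbb{P}^n$ from $\tau(\mathbb{P}^n)\to\mathbb{P}^n$ to the evaluation fibration $ev\colon\mathrm{Hol}_1(n)\to\mathbb{P}^n$, restricting on fibers to a homotopy equivalence $S^{2n-1}\simeq\mathrm{Rat}_1(n)$.
   Context: $\mathrm{Hol}_1(n)$ is the space of holomorphic maps $\mathbb{P}^1\to\mathbb{P}^n$ of degree one; $ev(f)=f([1:0])$; $\mathrm{Rat}_1(n)=ev^{-1}([1:0:\dots:0])$ is the fiber over the basepoint. *)

theory Defs
  imports "HOL-Analysis.Analysis"
begin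

text \<open>Complex projective space P(C^k), modelled (homeomorphically) as the set of
  rank-one orthogonal projections: the line through v \<noteq> 0 is sent to v v^*/|v|^2.\<close>

definition proj :: "complex^'k \<Rightarrow> complex^'k^'k" where
  "proj v = (\<chi> i j. v$i * cnj (v$j) / complex_of_real ((norm v)^2))"

definition CP :: "(complex^'k^'k) set" where
  "CP = proj ` {v. v \<noteq> 0}"

text \<open>The metric induced by the Frobenius norm is twice the Fubini--Study metric
  g_FS(w,w) = |w|^2 (w orthogonal to a unit representative), so FS-unit vectors are
  those of Frobenius norm sqrt 2.\<close>

definition UTCP :: "((complex^'k^'k) \<times> (complex^'k^'k)) set" where
  "UTCP = {(P, X). P \<in> CP \<and>
      (\<exists>\<gamma>::real \<Rightarrow> complex^'k^'k. (\<forall>t. \<gamma> t \<in> CP) \<and> \<gamma> 0 = P \<and>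
            (\<gamma> has_vector_derivative X) (at 0)) \<and>
      norm X = sqrt 2}"

text \<open>Holomorphic maps P^1 \<rightarrow> P^n of degree one: exactly the maps
  [s:t] \<mapsto> [s a + t b] with a, b linearly independent.\<close>

definition Hol1 :: "((complex^2^2) \<Rightarrow> (complex^'k^'k)) set" where
  "Hol1 = {f. f \<in> extensional (CP :: (complex^2^2) set) \<and>
     (\<exists>a b :: complex^'k. (\<forall>c d. c *s a + d *s b = 0 \<longrightarrow> c = 0 \<and> d = 0) \<and>
        (\<forall>z::complex^2. z \<noteq> 0 \<longrightarrow> f (proj z) = proj (z$1 *s a + z$2 *s b)))}"

text \<open>Topology on Hol1: compact-open topology, which (P^1 compact, P^n metric) is the
  topology of uniform convergence, i.e. induced by the sup distance.\<close>

definition supdist :: "((complex^2^2) \<Rightarrow> (complex^'k^'k)) \<Rightarrow> ((complex^2^2) \<Rightarrow> (complex^'k^'k)) \<Rightarrow> real" where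
  "supdist f g = Sup ((\<lambda>P. dist (f P) (g P)) ` (CP :: (complex^2^2) set))"

definition Hol1_top :: "((complex^2^2) \<Rightarrow> (complex^'k^'k)) topology" where
  "Hol1_top = topology (\<lambda>U. U \<subseteq> Hol1 \<and>
      (\<forall>f\<in>U. \<exists>e>0. \<forall>g\<in>Hol1. supdist f g < e \<longrightarrow> g \<in> U))"

definition ev :: "((complex^2^2) \<Rightarrow> (complex^'k^'k)) \<Rightarrow> complex^'k^'k" where
  "ev f = f (proj (axis 1 1 :: complex^2))"

end

theory Submission
  imports Defs
begin

text \<open>A unit tangent vector of \<open>P\<^sup>n\<close> at \<open>[v]\<close>, \<open>|v| = 1\<close>, is the matrix
  \<open>w v\<^sup>* + v w\<^sup>*\<close> for a unit vector \<open>w \<perp> v\<close>; it is sent to the degree-one map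
  \<open>[s:t] \<mapsto> [s v + t w]\<close>. Conversely, every degree-one map is \<open>[s:t] \<mapsto> [s v + t b]\<close> with
  \<open>|v| = 1\<close> and \<open>b\<close> independent of \<open>v\<close>; its values at \<open>[1:0]\<close>, \<open>[0:1]\<close>, \<open>[1:1]\<close> determine the
  matrix \<open>v b\<^sup>*\<close> continuously, and the normalised component \<open>w\<close> of \<open>b\<close> orthogonal to \<open>v\<close> gives
  a unit tangent vector at \<open>[v]\<close>. One composite is the identity; moving \<open>b\<close> linearly to \<open>w\<close>
  deforms the other one into the identity. Both maps and the deformation fix the base point
  \<open>[v]\<close>, so everything restricts to the fibres.\<close>

subsection \<open>Hermitian linear algebra\<close>

definition cinner :: "complex^'n \<Rightarrow> complex^'n \<Rightarrow> complex" where
  "cinner u w = (\<Sum>i\<in>UNIV. u$i * cnj (w$i))"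

definition outer :: "complex^'m \<Rightarrow> complex^'n \<Rightarrow> complex^'n^'m" where
  "outer u w = (\<chi> i j. u$i * cnj (w$j))"

definition mscale :: "complex \<Rightarrow> complex^'n^'m \<Rightarrow> complex^'n^'m" where
  "mscale c M = (\<chi> i j. c * M$i$j)"

definition ctranspose :: "complex^'n^'m \<Rightarrow> complex^'m^'n" where
  "ctranspose M = (\<chi> i j. cnj (M$j$i))"

definition orthonormal_pair :: "complex^'n \<Rightarrow> complex^'n \<Rightarrow> bool" where
  "orthonormal_pair v w \<longleftrightarrow> cinner v v = 1 \<and> cinner w w = 1 \<and> cinner v w = 0"

definition cindep_pair :: "complex^'n \<Rightarrow> complex^'n \<Rightarrow> bool" where
  "cindep_pair v b \<longleftrightarrow> (\<forall>c d. c *s v + d *s b = 0 \<longrightarrow> c = 0 \<and> d = 0)"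

lemma norm_vec_power2: "(norm (u::'a::real_normed_vector^'n))^2 = (\<Sum>i\<in>UNIV. (norm (u$i))^2)"
  by (simp add: norm_vec_def L2_set_def sum_nonneg)

lemma smult_scaleR_commute: "c *s (r *\<^sub>R u) = r *\<^sub>R (c *s (u::complex^'n))"
  by (simp add: vec_eq_iff)

lemma cinner_self: "cinner u u = of_real ((norm u)^2)"
proof -
  have "cinner u u = (\<Sum>i\<in>UNIV. of_real ((cmod (u$i))^2))"
    unfolding cinner_def by (intro sum.cong refl) (simp add: complex_norm_square[symmetric])
  then show ?thesis by (simp add: norm_vec_power2)
qed

lemma cinner_self_eq_0 [simp]: "cinner u u = 0 \<longleftrightarrow> u = 0"
  by (simp add: cinner_self)

lemma cinner_self_eq_1_imp_norm: "cinner u u = 1 \<Longrightarrow> norm u = 1"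
proof -
  assume "cinner u u = 1"
  then have "(norm u)^2 = 1" using cinner_self[of u] by (metis of_real_eq_1_iff)
  then show ?thesis using norm_ge_zero[of u] by (auto simp: power2_eq_1_iff)
qed

lemma cnj_cinner: "cnj (cinner u w) = cinner w u"
  by (simp add: cinner_def mult.commute)

lemma cinner_add_left: "cinner (u + v) w = cinner u w + cinner v w"
  by (simp add: cinner_def algebra_simps sum.distrib)
lemma cinner_add_right: "cinner w (u + v) = cinner w u + cinner w v"
  by (simp add: cinner_def algebra_simps sum.distrib)
lemma cinner_diff_left: "cinner (u - v) w = cinner u w - cinner v w"
  by (simp add: cinner_def algebra_simps sum_subtractf)
lemma cinner_diff_right: "cinner w (u - v) = cinner w u - cinner w v"
  by (simp add: cinner_def algebra_simps sum_subtractf)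
lemma cinner_smult_left: "cinner (c *s u) w = c * cinner u w"
  by (simp add: cinner_def sum_distrib_left algebra_simps)
lemma cinner_smult_right: "cinner w (c *s u) = cnj c * cinner w u"
  by (simp add: cinner_def sum_distrib_left algebra_simps)
lemma cinner_scaleR_left: "cinner (r *\<^sub>R u) w = of_real r * cinner u w"
  by (simp add: cinner_def sum_distrib_left algebra_simps scaleR_conv_of_real[where 'a=complex])
lemma cinner_scaleR_right: "cinner w (r *\<^sub>R u) = of_real r * cinner w u"
  by (simp add: cinner_def sum_distrib_left algebra_simps scaleR_conv_of_real[where 'a=complex])
lemma cinner_zero_left [simp]: "cinner 0 u = 0"
  by (simp add: cinner_def)

lemmas cinner_simps = cinner_add_left cinner_add_right cinner_diff_left cinner_diff_right
  cinner_smult_left cinner_smult_right cinner_scaleR_left cinner_scaleR_right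

lemma orthonormal_pair_cinner_swap: "orthonormal_pair v w \<Longrightarrow> cinner w v = 0"
  by (metis orthonormal_pair_def cnj_cinner complex_cnj_zero)

lemma orthonormal_pair_imp_cindep_pair:
  assumes "orthonormal_pair v w"
  shows "cindep_pair v w"
  unfolding cindep_pair_def
proof (intro allI impI)
  fix c d assume combination: "c *s v + d *s w = 0"
  have "cinner (c *s v + d *s w) v = c" "cinner (c *s v + d *s w) w = d"
    using assms orthonormal_pair_cinner_swap[OF assms]
    by (simp_all add: cinner_simps orthonormal_pair_def)
  then show "c = 0 \<and> d = 0" unfolding combination by simp
qed

lemma cindep_pair_nonzero:
  assumes "cindep_pair v b"
  shows "v \<noteq> 0" "b \<noteq> 0" "v + b \<noteq> 0" "b - c *s v \<noteq> 0"
proof -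
  have "\<not> (x *s v + y *s b = 0)" if "x \<noteq> 0 \<or> y \<noteq> 0" for x y
    using assms that unfolding cindep_pair_def by blast
  from this[of 1 0] this[of 0 1] this[of 1 1] this[of "-c" 1]
  show "v \<noteq> 0" "b \<noteq> 0" "v + b \<noteq> 0" "b - c *s v \<noteq> 0"
    by (simp_all add: vec_eq_iff)
qed

lemma cindep_pair_combination_nonzero:
  fixes z :: "complex^2"
  assumes "cindep_pair v b" "z \<noteq> 0"
  shows "z$1 *s v + z$2 *s b \<noteq> 0"
proof
  assume "z$1 *s v + z$2 *s b = 0"
  then have "z$1 = 0 \<and> z$2 = 0" using assms(1) unfolding cindep_pair_def by blast
  then have "z = 0" by (simp add: vec_eq_iff forall_2)
  with assms(2) show False by simp
qed

lemma outer_mult: "outer a b ** outer c d = mscale (cinner c b) (outer a d)"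
  by (simp add: outer_def mscale_def cinner_def matrix_matrix_mult_def vec_eq_iff sum_distrib_left
      sum_distrib_right algebra_simps)

lemma outer_mult_vec: "outer a b *v c = cinner c b *s a"
  by (simp add: outer_def cinner_def matrix_vector_mult_def vec_eq_iff sum_distrib_left algebra_simps)

lemma mscale_mult_left: "mscale a M ** N = mscale a (M ** N)"
  by (simp add: mscale_def matrix_matrix_mult_def vec_eq_iff sum_distrib_left algebra_simps)
lemma mscale_mult_right: "M ** mscale a N = mscale a (M ** N)"
  by (simp add: mscale_def matrix_matrix_mult_def vec_eq_iff sum_distrib_left algebra_simps)
lemma mscale_mscale: "mscale a (mscale b M) = mscale (a * b) M"
  by (simp add: mscale_def vec_eq_iff)
lemma mscale_1 [simp]: "mscale 1 M = M"
  by (simp add: mscale_def vec_eq_iff)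
lemma mscale_0 [simp]: "mscale 0 M = 0"
  by (simp add: mscale_def vec_eq_iff)
lemma mscale_diff_left: "mscale a M - mscale b M = mscale (a - b) M"
  by (simp add: mscale_def vec_eq_iff algebra_simps)
lemma scaleR_mscale: "r *\<^sub>R M = mscale (of_real r) M"
  by (simp add: mscale_def vec_eq_iff scaleR_conv_of_real[where 'a=complex])

lemma trace_outer: "trace (outer a b) = cinner a b"
  by (simp add: trace_def outer_def cinner_def)
lemma trace_mscale: "trace (mscale a M) = a * trace M"
  by (simp add: trace_def mscale_def sum_distrib_left)

lemma ctranspose_outer: "ctranspose (outer a b) = outer b a"
  by (simp add: ctranspose_def outer_def vec_eq_iff)
lemma ctranspose_add: "ctranspose (M + N) = ctranspose M + ctranspose N"
  by (simp add: ctranspose_def vec_eq_iff)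
lemma ctranspose_scaleR: "ctranspose (r *\<^sub>R M) = r *\<^sub>R ctranspose M"
  by (simp add: ctranspose_def vec_eq_iff scaleR_conv_of_real[where 'a=complex])

lemma outer_add_left: "outer (u + v) w = outer u w + outer v w"
  by (simp add: outer_def vec_eq_iff algebra_simps)
lemma outer_add_right: "outer w (u + v) = outer w u + outer w v"
  by (simp add: outer_def vec_eq_iff algebra_simps)
lemma outer_smult_right: "outer w (c *s u) = mscale (cnj c) (outer w u)"
  by (simp add: outer_def mscale_def vec_eq_iff algebra_simps)
lemma outer_scaleR_left: "outer (r *\<^sub>R u) w = r *\<^sub>R outer u w"
  by (simp add: outer_def vec_eq_iff algebra_simps scaleR_conv_of_real[where 'a=complex])
lemma outer_scaleR_right: "outer w (r *\<^sub>R u) = r *\<^sub>R outer w u"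
  by (simp add: outer_def vec_eq_iff algebra_simps scaleR_conv_of_real[where 'a=complex])

lemma norm_outer: "norm (outer u w) = norm u * norm w"
proof -
  have "(norm (outer u w))^2 = (\<Sum>i\<in>UNIV. \<Sum>j\<in>UNIV. (cmod (u$i))^2 * (cmod (w$j))^2)"
    by (simp add: norm_vec_power2 outer_def norm_mult power_mult_distrib)
  also have "\<dots> = (norm u * norm w)^2"
    by (simp add: norm_vec_power2 sum_product power_mult_distrib)
  finally show ?thesis by (simp add: power2_eq_iff_nonneg)
qed

lemma norm_power2_outer_sym:
  "complex_of_real ((norm (outer w v + outer v w))^2)
     = 2 * cinner w w * cinner v v + (cinner w v)^2 + (cinner v w)^2"
proof -
  have norm_cplx: "complex_of_real ((norm M)^2) = (\<Sum>i\<in>UNIV. \<Sum>j\<in>UNIV. M$i$j * cnj (M$i$j))"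
    for M :: "complex^'n^'n"
    unfolding norm_vec_power2 of_real_sum
    by (intro sum.cong refl) (simp add: complex_norm_square[symmetric] norm_vec_power2)
  have entry: "(outer w v + outer v w)$i$j * cnj ((outer w v + outer v w)$i$j)
     = (w$i * cnj (w$i)) * (v$j * cnj (v$j)) + (v$i * cnj (v$i)) * (w$j * cnj (w$j))
       + (w$i * cnj (v$i)) * (w$j * cnj (v$j)) + (v$i * cnj (w$i)) * (v$j * cnj (w$j))" for i j
    by (simp add: outer_def algebra_simps)
  show ?thesis
    unfolding norm_cplx entry by (simp add: sum.distrib sum_product[symmetric] cinner_def power2_eq_square)
qed

subsection \<open>Projective space and its unit tangent bundle\<close>

lemma proj_eq_mscale: "proj u = mscale (1 / cinner u u) (outer u u)"
  by (simp add: proj_def mscale_def outer_def cinner_self vec_eq_iff)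

lemma proj_in_CP: "u \<noteq> 0 \<Longrightarrow> proj u \<in> CP"
  by (simp add: CP_def)

lemma proj_unit: "cinner v v = 1 \<Longrightarrow> proj v = outer v v"
  by (simp add: proj_eq_mscale)

lemma outer_unit_in_CP: "cinner v v = 1 \<Longrightarrow> outer v v \<in> CP"
  by (metis proj_unit proj_in_CP cinner_self_eq_0 zero_neq_one)

lemma proj_scaleR: "r \<noteq> 0 \<Longrightarrow> proj (r *\<^sub>R u) = proj u"
  by (simp add: proj_eq_mscale cinner_simps outer_scaleR_left outer_scaleR_right scaleR_mscale
      mscale_mscale)

lemma CP_obtain_unit:
  assumes "M \<in> CP"
  obtains v where "cinner v v = 1" "M = outer v v"
proof -
  from assms obtain u where u: "u \<noteq> 0" "M = proj u" by (auto simp: CP_def)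
  define v where "v = (1 / norm u) *\<^sub>R u"
  have unit: "cinner v v = 1"
    using u by (simp add: v_def cinner_simps cinner_self power2_eq_square)
  have "M = proj v" using u by (simp add: v_def proj_scaleR)
  with unit show ?thesis using that proj_unit by metis
qed

lemma CP_idempotent: "M \<in> CP \<Longrightarrow> M ** M = M"
  by (elim CP_obtain_unit) (simp add: outer_mult)

lemma CP_ctranspose: "M \<in> CP \<Longrightarrow> ctranspose M = M"
  by (elim CP_obtain_unit) (simp add: ctranspose_outer)

lemma norm_CP: "M \<in> CP \<Longrightarrow> norm M = 1"
  by (elim CP_obtain_unit) (simp add: norm_outer cinner_self_eq_1_imp_norm)

lemma CP_nonempty: "CP \<noteq> {}"
  using proj_in_CP[of "axis undefined 1"] by (auto simp: axis_eq_0_iff)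

lemma CP_eq_proj_sphere: "CP = proj ` sphere 0 1"
proof
  show "proj ` sphere 0 1 \<subseteq> CP" unfolding CP_def by auto
  show "CP \<subseteq> proj ` sphere 0 1"
  proof
    fix M assume "M \<in> CP"
    then obtain u where "u \<noteq> 0" "M = proj u" by (auto simp: CP_def)
    then have "M = proj ((1 / norm u) *\<^sub>R u)" "(1 / norm u) *\<^sub>R u \<in> sphere 0 1"
      by (simp_all add: proj_scaleR)
    then show "M \<in> proj ` sphere 0 1" by blast
  qed
qed

lemma compact_CP: "compact CP"
proof -
  have "continuous_on (sphere 0 1) proj"
    unfolding proj_def by (intro continuous_intros) auto
  then show ?thesis
    unfolding CP_eq_proj_sphere by (intro compact_continuous_image compact_sphere)
qed

lemma bounded_linear_ctranspose: "bounded_linear ctranspose"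
  by (intro linear_conv_bounded_linear[THEN iffD1] linearI)
    (simp_all add: ctranspose_add ctranspose_scaleR)

lemma bounded_bilinear_matrix_mult: "bounded_bilinear (\<lambda>(A::complex^'n^'m) (B::complex^'k^'n). A ** B)"
  unfolding bilinear_conv_bounded_bilinear[symmetric] bilinear_def
  by (auto intro!: linearI simp: matrix_add_ldistrib matrix_matrix_mult_def vec_eq_iff
      sum.distrib algebra_simps scaleR_sum_right scaleR_conv_of_real[where 'a=complex] sum_distrib_left)

text \<open>Differentiating \<open>\<gamma>\<^sup>* = \<gamma>\<close> and \<open>\<gamma>\<^sup>2 = \<gamma>\<close> along a curve of projections.\<close>

lemma CP_tangent_vector:
  assumes "\<And>t. \<gamma> t \<in> CP" and "(\<gamma> has_vector_derivative X) (at 0)"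
  shows "ctranspose X = X" "X = \<gamma> 0 ** X + X ** \<gamma> 0"
proof -
  have "((\<lambda>t. ctranspose (\<gamma> t)) has_vector_derivative ctranspose X) (at 0)"
    by (rule bounded_linear.has_vector_derivative[OF bounded_linear_ctranspose assms(2)])
  moreover have "(\<lambda>t. ctranspose (\<gamma> t)) = \<gamma>" using assms(1) CP_ctranspose by auto
  ultimately show "ctranspose X = X" using assms(2) vector_derivative_unique_at by metis
  have "((\<lambda>t. \<gamma> t ** \<gamma> t) has_vector_derivative \<gamma> 0 ** X + X ** \<gamma> 0) (at 0)"
    by (rule bounded_bilinear.has_vector_derivative[OF bounded_bilinear_matrix_mult assms(2) assms(2)])
  moreover have "(\<lambda>t. \<gamma> t ** \<gamma> t) = \<gamma>" using assms(1) CP_idempotent by auto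
  ultimately show "X = \<gamma> 0 ** X + X ** \<gamma> 0" using assms(2) vector_derivative_unique_at by metis
qed

lemma hermitian_tangent_form:
  assumes v: "cinner v v = 1" and herm: "ctranspose X = X"
    and tangent: "X = outer v v ** X + X ** outer v v"
  defines "w \<equiv> X *v v"
  shows "X = outer w v + outer v w" "cinner v w = 0"
proof -
  have "X ** outer v v = outer w v"
    by (simp add: w_def outer_def matrix_matrix_mult_def matrix_vector_mult_def vec_eq_iff
        sum_distrib_right sum_distrib_left mult_ac)
  moreover have "outer v v ** X = outer v w"
  proof -
    have "cnj (X$j$k) = X$k$j" for j k using herm by (simp add: ctranspose_def vec_eq_iff)
    then show ?thesis
      by (simp add: w_def outer_def matrix_matrix_mult_def matrix_vector_mult_def vec_eq_iff
          sum_distrib_left algebra_simps)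
  qed
  ultimately show X: "X = outer w v + outer v w" using tangent by simp
  have "w = X *v v" unfolding w_def ..
  then have "w = (outer w v + outer v w) *v v" using X by simp
  then have "cinner v w *s v = 0"
    using v by (simp add: matrix_vector_mult_add_rdistrib outer_mult_vec vec_eq_iff)
  then show "cinner v w = 0" using v by (metis cinner_self_eq_0 vector_mul_eq_0 zero_neq_one)
qed

lemma UTCP_imp_orthonormal_frame:
  assumes "(P, X) \<in> UTCP"
  obtains v w where "orthonormal_pair v w" "P = outer v v" "X = outer w v + outer v w"
proof -
  from assms obtain \<gamma> where \<gamma>: "\<And>t. \<gamma> t \<in> CP" "\<gamma> 0 = P" "(\<gamma> has_vector_derivative X) (at 0)"
    and norm_X: "norm X = sqrt 2" and "P \<in> CP"
    unfolding UTCP_def by blast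
  obtain v where v: "cinner v v = 1" "P = outer v v" using \<open>P \<in> CP\<close> by (rule CP_obtain_unit)
  define w where "w = X *v v"
  have X: "X = outer w v + outer v w" and vw: "cinner v w = 0"
    using hermitian_tangent_form[OF v(1)] CP_tangent_vector[OF \<gamma>(1,3)] \<gamma>(2) v(2)
    unfolding w_def by metis+
  have "complex_of_real ((norm X)^2) = 2 * cinner w w"
    using norm_power2_outer_sym[of w v] X v vw by (simp add: cnj_cinner[of v w, symmetric])
  then have "cinner w w = 1" using norm_X by simp
  then show ?thesis using that v vw X unfolding orthonormal_pair_def by blast
qed

lemma orthonormal_frame_in_UTCP:
  assumes vw: "orthonormal_pair v w"
  shows "(outer v v, outer w v + outer v w) \<in> UTCP"
proof -
  have "cinner v v = 1" "cinner w w = 1" "cinner v w = 0" "cinner w v = 0"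
    using vw orthonormal_pair_cinner_swap[OF vw] by (auto simp: orthonormal_pair_def)
  note products = this
  define \<gamma> where "\<gamma> t = proj (cos t *\<^sub>R v + sin t *\<^sub>R w)" for t
  have unit: "cinner (cos t *\<^sub>R v + sin t *\<^sub>R w) (cos t *\<^sub>R v + sin t *\<^sub>R w) = 1" for t
    by (simp add: cinner_simps products) (metis of_real_add of_real_mult of_real_1 sin_cos_squared_add3)
  have \<gamma>_eq: "\<gamma> = (\<lambda>t. (cos t)^2 *\<^sub>R outer v v + (cos t * sin t) *\<^sub>R (outer w v + outer v w)
       + (sin t)^2 *\<^sub>R outer w w)"
    unfolding \<gamma>_def proj_unit[OF unit]
    by (simp add: fun_eq_iff outer_add_left outer_add_right outer_scaleR_left outer_scaleR_right
        algebra_simps power2_eq_square)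
  have "(\<gamma> has_vector_derivative (outer w v + outer v w)) (at 0)"
    unfolding \<gamma>_eq by (rule has_vector_derivative_eq_rhs, (rule derivative_intros)+, simp_all)
  moreover have "\<gamma> t \<in> CP" for t
    unfolding \<gamma>_def by (rule proj_in_CP) (metis unit cinner_self_eq_0 zero_neq_one)
  moreover have "\<gamma> 0 = outer v v" by (simp add: \<gamma>_def proj_unit products)
  moreover have "norm (outer w v + outer v w) = sqrt 2"
  proof -
    have "complex_of_real ((norm (outer w v + outer v w))^2) = of_real 2"
      using norm_power2_outer_sym[of w v] products by simp
    then show ?thesis by (simp only: of_real_eq_iff real_sqrt_unique norm_ge_zero)
  qed
  ultimately show ?thesis
    unfolding UTCP_def using outer_unit_in_CP products by blast
qed

subsection \<open>Degree-one maps\<close>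

type_synonym 'n cmat = "complex^'n^'n"
type_synonym 'n P1_map = "complex^2^2 \<Rightarrow> complex^'n^'n"

text \<open>For \<open>x = (v v\<^sup>*, v b\<^sup>*)\<close> with \<open>|v| = 1\<close> and \<open>Z = [z]\<close>, \<open>hol_num x Z\<close> is
  \<open>(z\<^sub>1 v + z\<^sub>2 b)(z\<^sub>1 v + z\<^sub>2 b)\<^sup>* / |z|\<^sup>2\<close>, so \<open>hol_fun x\<close> is the map
  \<open>[z] \<mapsto> [z\<^sub>1 v + z\<^sub>2 b]\<close>. Unlike the pair \<open>(v, b)\<close>, which is determined only up to a phase,
  the pair of matrices \<open>x\<close> depends continuously on the map, and \<open>hol_num\<close> is jointly continuous.\<close>

definition hol_num :: "('n::finite) cmat \<times> 'n cmat \<Rightarrow> complex^2^2 \<Rightarrow> 'n cmat" where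
  "hol_num x Z = mscale (Z$1$1) (fst x) + mscale (Z$1$2) (snd x)
     + mscale (Z$2$1) (ctranspose (snd x)) + mscale (Z$2$2) (ctranspose (snd x) ** snd x)"

definition hol_map :: "('n::finite) cmat \<times> 'n cmat \<Rightarrow> complex^2^2 \<Rightarrow> 'n cmat" where
  "hol_map x Z = mscale (1 / trace (hol_num x Z)) (hol_num x Z)"

definition hol_fun :: "('n::finite) cmat \<times> 'n cmat \<Rightarrow> 'n P1_map" where
  "hol_fun x = restrict (hol_map x) CP"

definition hol_data :: "(('n::finite) cmat \<times> 'n cmat) set" where
  "hol_data = {(outer v v, outer v b) | v b. cinner v v = 1 \<and> cindep_pair v b}"

lemma hol_num_proj:
  assumes "cinner v v = 1"
  shows "hol_num (outer v v, outer v b) (proj z)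
    = mscale (1 / cinner z z) (outer (z$1 *s v + z$2 *s b) (z$1 *s v + z$2 *s b))"
proof -
  have BB: "ctranspose (outer v b) ** outer v b = outer b b"
    using assms by (simp add: ctranspose_outer outer_mult)
  show ?thesis
    unfolding hol_num_def fst_conv snd_conv BB proj_eq_mscale
    by (simp add: mscale_def outer_def ctranspose_def vec_eq_iff algebra_simps)
qed

lemma hol_map_proj:
  assumes "cinner v v = 1" "cindep_pair v b" "z \<noteq> 0"
  shows "trace (hol_num (outer v v, outer v b) (proj z)) \<noteq> 0"
    and "hol_map (outer v v, outer v b) (proj z) = proj (z$1 *s v + z$2 *s b)"
proof -
  let ?u = "z$1 *s v + z$2 *s b"
  have "cinner ?u ?u \<noteq> 0" "cinner z z \<noteq> 0"
    using cindep_pair_combination_nonzero[OF assms(2,3)] assms(3) by simp_all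
  then show "trace (hol_num (outer v v, outer v b) (proj z)) \<noteq> 0"
    "hol_map (outer v v, outer v b) (proj z) = proj ?u"
    unfolding hol_map_def hol_num_proj[OF assms(1)] trace_mscale trace_outer mscale_mscale
    by (simp_all add: proj_eq_mscale)
qed

lemma hol_data_trace_nonzero:
  assumes "x \<in> hol_data" "Z \<in> CP"
  shows "trace (hol_num x Z) \<noteq> 0"
  using assms hol_map_proj(1) unfolding hol_data_def CP_def by blast

lemma hol_fun_apply: "Z \<in> CP \<Longrightarrow> hol_fun x Z = hol_map x Z"
  by (simp add: hol_fun_def)

lemma hol_fun_proj:
  assumes "cinner v v = 1" "cindep_pair v b" "z \<noteq> 0"
  shows "hol_fun (outer v v, outer v b) (proj z) = proj (z$1 *s v + z$2 *s b)"
  using assms by (simp add: hol_fun_apply proj_in_CP hol_map_proj)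

lemma hol_fun_in_Hol1:
  assumes "x \<in> hol_data"
  shows "hol_fun x \<in> Hol1"
  using assms hol_fun_proj unfolding hol_data_def Hol1_def cindep_pair_def
  by (fastforce simp: hol_fun_def)

lemma Hol1_obtain_hol_data:
  assumes "h \<in> Hol1"
  obtains v b where "cinner v v = 1" "cindep_pair v b" "h = hol_fun (outer v v, outer v b)"
proof -
  from assms obtain a b where ab: "cindep_pair a b"
    and h: "\<And>z::complex^2. z \<noteq> 0 \<Longrightarrow> h (proj z) = proj (z$1 *s a + z$2 *s b)"
    unfolding Hol1_def cindep_pair_def by blast
  have "a \<noteq> 0" using cindep_pair_nonzero(1)[OF ab] .
  define s where "s = 1 / norm a"
  have s: "s \<noteq> 0" using \<open>a \<noteq> 0\<close> by (simp add: s_def)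
  have unit: "cinner (s *\<^sub>R a) (s *\<^sub>R a) = 1"
    using \<open>a \<noteq> 0\<close> by (simp add: s_def cinner_simps cinner_self power2_eq_square)
  have indep: "cindep_pair (s *\<^sub>R a) (s *\<^sub>R b)"
    using ab s unfolding cindep_pair_def
    by (metis scaleR_right_distrib smult_scaleR_commute scaleR_eq_0_iff)
  have "h = hol_fun (outer (s *\<^sub>R a) (s *\<^sub>R a), outer (s *\<^sub>R a) (s *\<^sub>R b))"
  proof (rule extensionalityI)
    show "h \<in> extensional CP" using assms by (simp add: Hol1_def)
    show "hol_fun (outer (s *\<^sub>R a) (s *\<^sub>R a), outer (s *\<^sub>R a) (s *\<^sub>R b)) \<in> extensional CP"
      by (simp add: hol_fun_def)
    fix Z :: "complex^2^2" assume "Z \<in> CP"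
    then obtain z where z: "z \<noteq> 0" "Z = proj z" by (auto simp: CP_def)
    have "z$1 *s (s *\<^sub>R a) + z$2 *s (s *\<^sub>R b) = s *\<^sub>R (z$1 *s a + z$2 *s b)"
      by (simp add: scaleR_right_distrib smult_scaleR_commute)
    then show "h Z = hol_fun (outer (s *\<^sub>R a) (s *\<^sub>R a), outer (s *\<^sub>R a) (s *\<^sub>R b)) Z"
      using z h hol_fun_proj[OF unit indep z(1)] by (simp add: proj_scaleR[OF s])
  qed
  with unit indep that show ?thesis by blast
qed

definition point_01 :: "complex^2^2" where "point_01 = proj (axis 2 1)"
definition point_11 :: "complex^2^2" where "point_11 = proj (\<chi> _. 1)"

lemma points_nonzero: "axis 1 1 \<noteq> (0::complex^2)" "axis 2 1 \<noteq> (0::complex^2)" "(\<chi> _. 1) \<noteq> (0::complex^2)"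
  by (simp, simp, simp add: vec_eq_iff)

lemma points_in_CP: "proj (axis 1 1 :: complex^2) \<in> CP" "point_01 \<in> CP" "point_11 \<in> CP"
  unfolding point_01_def point_11_def using points_nonzero by (simp_all add: proj_in_CP)

lemma hol_fun_values:
  assumes "cinner v v = 1" "cindep_pair v b"
  shows "ev (hol_fun (outer v v, outer v b)) = outer v v"
    "hol_fun (outer v v, outer v b) point_01 = proj b"
    "hol_fun (outer v v, outer v b) point_11 = proj (v + b)"
  using hol_fun_proj[OF assms points_nonzero(1)] hol_fun_proj[OF assms points_nonzero(2)]
    hol_fun_proj[OF assms points_nonzero(3)] proj_unit[OF assms(1)]
  by (simp_all add: ev_def point_01_def point_11_def axis_def)

lemma Hol1_values_in_CP:
  assumes "h \<in> Hol1" "Z \<in> CP"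
  shows "h Z \<in> CP"
proof -
  obtain v b where vb: "cinner v v = 1" "cindep_pair v b" "h = hol_fun (outer v v, outer v b)"
    using assms(1) by (rule Hol1_obtain_hol_data)
  obtain z where "z \<noteq> 0" "Z = proj z" using assms(2) by (auto simp: CP_def)
  then show ?thesis
    using vb hol_fun_proj cindep_pair_combination_nonzero proj_in_CP by metis
qed

text \<open>For \<open>P = [v]\<close>, \<open>Q = [b]\<close>, \<open>R = [v + b]\<close> and \<open>|v| = 1\<close>, \<open>P Q - P R Q\<close> is
  \<open>-(1 - tr (R Q))\<close> times \<open>v b\<^sup>*\<close>.\<close>

definition cross_of :: "('n::finite) cmat \<Rightarrow> 'n cmat \<Rightarrow> 'n cmat \<Rightarrow> 'n cmat" where
  "cross_of P Q R = (-1 / Re (1 - trace (R ** Q))) *\<^sub>R (P ** Q - P ** (R ** Q))"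

lemma cross_of_values:
  assumes v: "cinner v v = 1" and vb: "cindep_pair v b"
  defines "t \<equiv> (norm (b - cinner b v *s v))^2 / ((norm (v + b))^2 * (norm b)^2)"
  shows "t > 0" "1 - trace (proj (v + b) ** proj b) = of_real t"
    "cross_of (outer v v) (proj b) (proj (v + b)) = outer v b"
proof -
  obtain c \<beta> \<sigma> where c: "cinner b v = c" and \<beta>: "cinner b b = \<beta>"
    and \<sigma>: "cinner (v + b) (v + b) = \<sigma>"
    by blast
  have vb_c: "cinner v b = cnj c" using c cnj_cinner by metis
  have \<sigma>_eq: "\<sigma> = 1 + c + cnj c + \<beta>"
    using \<sigma> by (simp add: cinner_simps v vb_c c \<beta> algebra_simps)
  have nonzero: "\<beta> \<noteq> 0" "\<sigma> \<noteq> 0" using cindep_pair_nonzero[OF vb] \<beta> \<sigma> by auto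
  show "t > 0"
    using cindep_pair_nonzero[OF vb] by (simp add: t_def)
  have "of_real t = cinner (b - c *s v) (b - c *s v) / (\<sigma> * \<beta>)"
    by (simp add: t_def cinner_self c flip: \<sigma> \<beta>)
  also have "cinner (b - c *s v) (b - c *s v) = \<beta> - c * cnj c"
    by (simp add: cinner_simps v vb_c c \<beta> algebra_simps)
  finally have t: "of_real t = (\<beta> - c * cnj c) / (\<sigma> * \<beta>)" .
  have Q: "proj b = mscale (1 / \<beta>) (outer b b)" by (simp add: proj_eq_mscale \<beta>)
  have R: "proj (v + b) = mscale (1 / \<sigma>) (outer (v + b) (v + b))" by (simp add: proj_eq_mscale \<sigma>)
  have RQ: "proj (v + b) ** proj b = mscale ((c + \<beta>) / (\<sigma> * \<beta>)) (outer (v + b) b)"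
    unfolding Q R mscale_mult_left mscale_mult_right outer_mult mscale_mscale
    by (simp add: cinner_simps c \<beta> ac_simps)
  have "1 - (c + \<beta>) / (\<sigma> * \<beta>) * (cnj c + \<beta>) = (\<sigma> * \<beta> - (c + \<beta>) * (cnj c + \<beta>)) / (\<sigma> * \<beta>)"
    using nonzero by (simp add: field_simps)
  also have "\<sigma> * \<beta> - (c + \<beta>) * (cnj c + \<beta>) = \<beta> - c * cnj c"
    by (simp add: \<sigma>_eq algebra_simps)
  finally show trace: "1 - trace (proj (v + b) ** proj b) = of_real t"
    unfolding t RQ trace_mscale trace_outer by (simp add: cinner_simps vb_c \<beta>)
  have "c / \<beta> - (c + \<beta>) / (\<sigma> * \<beta>) * (1 + c) = (c * \<sigma> - (c + \<beta>) * (1 + c)) / (\<sigma> * \<beta>)"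
    using nonzero by (simp add: field_simps)
  also have "c * \<sigma> - (c + \<beta>) * (1 + c) = - (\<beta> - c * cnj c)"
    by (simp add: \<sigma>_eq algebra_simps)
  finally have coeff: "c / \<beta> - (c + \<beta>) / (\<sigma> * \<beta>) * (1 + c) = - of_real t"
    by (simp add: t minus_divide_left)
  have "outer v v ** proj b = mscale (c / \<beta>) (outer v b)"
    unfolding Q mscale_mult_right outer_mult mscale_mscale by (simp add: c)
  moreover have "outer v v ** (proj (v + b) ** proj b)
      = mscale ((c + \<beta>) / (\<sigma> * \<beta>) * (1 + c)) (outer v b)"
    unfolding RQ mscale_mult_right outer_mult mscale_mscale by (simp add: cinner_simps c v ac_simps)
  ultimately have "outer v v ** proj b - outer v v ** (proj (v + b) ** proj b)
      = mscale (c / \<beta> - (c + \<beta>) / (\<sigma> * \<beta>) * (1 + c)) (outer v b)"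
    by (simp add: mscale_diff_left)
  then show "cross_of (outer v v) (proj b) (proj (v + b)) = outer v b"
    using \<open>t > 0\<close> unfolding cross_of_def trace coeff
    by (simp add: scaleR_mscale mscale_mscale)
qed

lemma gram_schmidt_pair:
  assumes v: "cinner v v = 1" and vb: "cindep_pair v b"
  obtains w r where "orthonormal_pair v w" "r > 0" "b = cinner b v *s v + r *\<^sub>R w"
proof -
  define d where "d = b - cinner b v *s v"
  define r where "r = norm d"
  have r: "r > 0" using cindep_pair_nonzero(4)[OF vb] by (simp add: r_def d_def)
  define w where "w = (1 / r) *\<^sub>R d"
  have "cinner v d = 0" by (simp add: d_def cinner_simps v cnj_cinner)
  then have "orthonormal_pair v w"
    using r v by (simp add: orthonormal_pair_def w_def cinner_simps cinner_self r_def power2_eq_square)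
  moreover have "b = cinner b v *s v + r *\<^sub>R w" using r by (simp add: w_def d_def)
  ultimately show ?thesis using r that by blast
qed

lemma cindep_pair_orthogonal_decomposition:
  assumes vw: "orthonormal_pair v w" and "r \<noteq> 0"
  shows "cindep_pair v (c *s v + r *\<^sub>R w)"
  unfolding cindep_pair_def
proof (intro allI impI)
  fix \<alpha> \<beta> assume combination: "\<alpha> *s v + \<beta> *s (c *s v + r *\<^sub>R w) = 0"
  have "cinner (\<alpha> *s v + \<beta> *s (c *s v + r *\<^sub>R w)) v = \<alpha> + \<beta> * c"
    "cinner (\<alpha> *s v + \<beta> *s (c *s v + r *\<^sub>R w)) w = \<beta> * of_real r"
    using vw orthonormal_pair_cinner_swap[OF vw]
    by (simp_all add: cinner_simps orthonormal_pair_def)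
  then show "\<alpha> = 0 \<and> \<beta> = 0" using \<open>r \<noteq> 0\<close> unfolding combination by simp
qed

lemma Hol1_normal_form:
  assumes "h \<in> Hol1"
  obtains v w c r where "orthonormal_pair v w" "r > 0"
    "h = hol_fun (outer v v, outer v (c *s v + r *\<^sub>R w))"
proof -
  obtain v b where "cinner v v = 1" "cindep_pair v b" "h = hol_fun (outer v v, outer v b)"
    using assms by (rule Hol1_obtain_hol_data)
  with gram_schmidt_pair that show ?thesis by metis
qed

definition unit_normal :: "('n::finite) cmat \<Rightarrow> 'n cmat \<Rightarrow> 'n cmat \<Rightarrow> 'n cmat" where
  "unit_normal P Q R = sgn (cross_of P Q R - cross_of P Q R ** P)"

lemma unit_normal_values:
  fixes c :: complex and r :: real
  assumes vw: "orthonormal_pair v w" and "r > 0"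
  defines "b \<equiv> c *s v + r *\<^sub>R w"
  shows "cross_of (outer v v) (proj b) (proj (v + b)) - cross_of (outer v v) (proj b) (proj (v + b)) ** outer v v
      = r *\<^sub>R outer v w"
    "unit_normal (outer v v) (proj b) (proj (v + b)) = outer v w"
proof -
  have v: "cinner v v = 1" using vw by (simp add: orthonormal_pair_def)
  have vb: "cindep_pair v b"
    unfolding b_def using cindep_pair_orthogonal_decomposition[OF vw] \<open>r > 0\<close> by simp
  have "cinner v b = cnj c"
    using vw by (simp add: b_def cinner_simps orthonormal_pair_def)
  then have product: "outer v b ** outer v v = mscale (cnj c) (outer v v)"
    by (simp add: outer_mult)
  have "outer v b = mscale (cnj c) (outer v v) + r *\<^sub>R outer v w"
    by (simp add: b_def outer_add_right outer_smult_right outer_scaleR_right)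
  then have "outer v b - outer v b ** outer v v = r *\<^sub>R outer v w"
    unfolding product by simp
  then show normal: "cross_of (outer v v) (proj b) (proj (v + b))
      - cross_of (outer v v) (proj b) (proj (v + b)) ** outer v v = r *\<^sub>R outer v w"
    by (simp add: cross_of_values(3)[OF v vb])
  have "norm (outer v w) = 1"
    using vw by (simp add: norm_outer orthonormal_pair_def cinner_self_eq_1_imp_norm)
  then show "unit_normal (outer v v) (proj b) (proj (v + b)) = outer v w"
    using \<open>r > 0\<close> by (simp add: unit_normal_def normal sgn_scaleR sgn_div_norm)
qed

subsection \<open>The topology of uniform convergence on degree-one maps\<close>

lemma continuous_on_matrix_mult [continuous_intros]:
  fixes f :: "'a::topological_space \<Rightarrow> complex^'n^'m" and g :: "'a \<Rightarrow> complex^'k^'n"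
  shows "continuous_on S f \<Longrightarrow> continuous_on S g \<Longrightarrow> continuous_on S (\<lambda>x. f x ** g x)"
  by (rule bounded_bilinear.continuous_on[OF bounded_bilinear_matrix_mult])

lemma continuous_on_ctranspose [continuous_intros]:
  fixes f :: "'a::topological_space \<Rightarrow> complex^'n^'m"
  shows "continuous_on S f \<Longrightarrow> continuous_on S (\<lambda>x. ctranspose (f x))"
  unfolding ctranspose_def by (intro continuous_intros)

lemma continuous_on_trace [continuous_intros]:
  fixes f :: "'a::topological_space \<Rightarrow> complex^'n^'n"
  shows "continuous_on S f \<Longrightarrow> continuous_on S (\<lambda>x. trace (f x))"
  unfolding trace_def by (intro continuous_intros)

lemma continuous_on_hol_num: "continuous_on S (\<lambda>p. hol_num (fst p) (snd p))"
  unfolding hol_num_def mscale_def by (intro continuous_intros)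

lemma istopology_Hol1_top:
  "istopology (\<lambda>U :: ('n::finite) P1_map set.
    U \<subseteq> Hol1 \<and> (\<forall>f\<in>U. \<exists>e>0. \<forall>g\<in>Hol1. supdist f g < e \<longrightarrow> g \<in> U))"
  unfolding istopology_def
proof (rule conjI; intro allI impI)
  fix S T :: "'n P1_map set"
  assume S: "S \<subseteq> Hol1 \<and> (\<forall>f\<in>S. \<exists>e>0. \<forall>g\<in>Hol1. supdist f g < e \<longrightarrow> g \<in> S)"
    and T: "T \<subseteq> Hol1 \<and> (\<forall>f\<in>T. \<exists>e>0. \<forall>g\<in>Hol1. supdist f g < e \<longrightarrow> g \<in> T)"
  show "S \<inter> T \<subseteq> Hol1 \<and> (\<forall>f\<in>S \<inter> T. \<exists>e>0. \<forall>g\<in>Hol1. supdist f g < e \<longrightarrow> g \<in> S \<inter> T)"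
  proof (intro conjI ballI)
    show "S \<inter> T \<subseteq> Hol1" using S by blast
    fix f assume "f \<in> S \<inter> T"
    then obtain e1 e2 where "e1 > 0" "\<forall>g\<in>Hol1. supdist f g < e1 \<longrightarrow> g \<in> S"
      "e2 > 0" "\<forall>g\<in>Hol1. supdist f g < e2 \<longrightarrow> g \<in> T"
      using S T by blast
    then show "\<exists>e>0. \<forall>g\<in>Hol1. supdist f g < e \<longrightarrow> g \<in> S \<inter> T"
      by (intro exI[of _ "min e1 e2"]) auto
  qed
next
  fix K :: "'n P1_map set set"
  assume K: "\<forall>U\<in>K. U \<subseteq> Hol1 \<and> (\<forall>f\<in>U. \<exists>e>0. \<forall>g\<in>Hol1. supdist f g < e \<longrightarrow> g \<in> U)"
  show "\<Union>K \<subseteq> Hol1 \<and> (\<forall>f\<in>\<Union>K. \<exists>e>0. \<forall>g\<in>Hol1. supdist f g < e \<longrightarrow> g \<in> \<Union>K)"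
  proof (intro conjI ballI)
    show "\<Union>K \<subseteq> Hol1" using K by blast
    fix f assume "f \<in> \<Union>K"
    then obtain U where "U \<in> K" "f \<in> U" by blast
    then obtain e where "e > 0" "\<forall>g\<in>Hol1. supdist f g < e \<longrightarrow> g \<in> U" using K by blast
    then show "\<exists>e>0. \<forall>g\<in>Hol1. supdist f g < e \<longrightarrow> g \<in> \<Union>K" using \<open>U \<in> K\<close> by blast
  qed
qed

lemma openin_Hol1_top:
  "openin Hol1_top U \<longleftrightarrow> U \<subseteq> Hol1 \<and> (\<forall>f\<in>U. \<exists>e>0. \<forall>g\<in>Hol1. supdist f g < e \<longrightarrow> g \<in> U)"
  unfolding Hol1_top_def by (subst topology_inverse'[OF istopology_Hol1_top]) (rule refl)

lemma topspace_Hol1_top [simp]: "topspace Hol1_top = Hol1"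
proof
  show "topspace Hol1_top \<subseteq> Hol1" unfolding topspace_def openin_Hol1_top by blast
  have "openin Hol1_top Hol1" unfolding openin_Hol1_top by (auto intro: exI[of _ 1])
  then show "Hol1 \<subseteq> topspace Hol1_top" by (rule openin_subset)
qed

lemma dist_le_supdist:
  assumes "h \<in> Hol1" "k \<in> Hol1" "Z \<in> CP"
  shows "dist (h Z) (k Z) \<le> supdist h k"
  unfolding supdist_def
proof (rule cSUP_upper[OF assms(3)])
  have "dist (h P) (k P) \<le> 2" if "P \<in> CP" for P
  proof -
    have "norm (h P) = 1" "norm (k P) = 1"
      using norm_CP Hol1_values_in_CP assms that by blast+
    then show ?thesis using norm_triangle_ineq4[of "h P" "k P"] by (simp add: dist_norm)
  qed
  then show "bdd_above ((\<lambda>P. dist (h P) (k P)) ` CP)" by (rule bdd_aboveI2)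
qed

lemma supdist_le: "(\<And>Z. Z \<in> CP \<Longrightarrow> dist (f Z) (g Z) \<le> c) \<Longrightarrow> supdist f g \<le> c"
  unfolding supdist_def by (rule cSUP_least[OF CP_nonempty])

lemma continuous_map_Hol1_eval:
  assumes "Z \<in> CP"
  shows "continuous_map (Hol1_top :: ('n::finite) P1_map topology) euclidean (\<lambda>h. h Z)"
  unfolding continuous_map_def topspace_Hol1_top
proof (intro conjI allI impI)
  fix U :: "'n cmat set" assume "openin euclidean U"
  then have U: "open U" by simp
  show "openin Hol1_top {h \<in> Hol1. h Z \<in> U}"
    unfolding openin_Hol1_top
  proof (intro conjI ballI)
    fix f assume f: "f \<in> {h \<in> Hol1. h Z \<in> U}"
    then obtain e where e: "e > 0" "ball (f Z) e \<subseteq> U" using U open_contains_ball by blast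
    have "g Z \<in> U" if "g \<in> Hol1" "supdist f g < e" for g
    proof -
      have "dist (f Z) (g Z) < e" using dist_le_supdist[of f g Z] f that assms by simp
      then show ?thesis using e(2) by (meson mem_ball subsetD)
    qed
    with e(1) show "\<exists>e>0. \<forall>g\<in>Hol1. supdist f g < e \<longrightarrow> g \<in> {h \<in> Hol1. h Z \<in> U}"
      by blast
  qed auto
qed auto

lemma continuous_map_into_Hol1_top:
  fixes \<phi> :: "'a \<Rightarrow> ('n::finite) P1_map"
  assumes "\<And>x. x \<in> topspace X \<Longrightarrow> \<phi> x \<in> Hol1"
    and "\<And>x e. x \<in> topspace X \<Longrightarrow> e > 0 \<Longrightarrow>
           \<exists>U. openin X U \<and> x \<in> U \<and> (\<forall>y\<in>U. supdist (\<phi> x) (\<phi> y) < e)"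
  shows "continuous_map X Hol1_top \<phi>"
  unfolding continuous_map_def topspace_Hol1_top
proof (intro conjI allI impI)
  show "\<phi> \<in> topspace X \<rightarrow> Hol1" using assms(1) by blast
  fix U :: "'n P1_map set" assume "openin Hol1_top U"
  then have U: "\<And>f. f \<in> U \<Longrightarrow> \<exists>e>0. \<forall>g\<in>Hol1. supdist f g < e \<longrightarrow> g \<in> U"
    unfolding openin_Hol1_top by blast
  show "openin X {x \<in> topspace X. \<phi> x \<in> U}"
  proof (subst openin_subopen, intro ballI)
    fix x assume x: "x \<in> {x \<in> topspace X. \<phi> x \<in> U}"
    then obtain e where e: "e > 0" "\<forall>g\<in>Hol1. supdist (\<phi> x) g < e \<longrightarrow> g \<in> U" using U by blast
    obtain V where V: "openin X V" "x \<in> V" "\<forall>y\<in>V. supdist (\<phi> x) (\<phi> y) < e"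
      using assms(2)[of x e] x e(1) by blast
    have "V \<subseteq> {x \<in> topspace X. \<phi> x \<in> U}"
    proof
      fix y assume "y \<in> V"
      then have "y \<in> topspace X" using V openin_subset by blast
      then show "y \<in> {x \<in> topspace X. \<phi> x \<in> U}" using V e assms(1) \<open>y \<in> V\<close> by blast
    qed
    with V show "\<exists>T. openin X T \<and> x \<in> T \<and> T \<subseteq> {x \<in> topspace X. \<phi> x \<in> U}" by blast
  qed
qed

lemma uniformly_close_on_compact:
  fixes F :: "'a::heine_borel \<Rightarrow> 'b::metric_space \<Rightarrow> 'c::metric_space"
  assumes "compact K" "r > 0" "continuous_on (cball a r \<times> K) (\<lambda>p. F (fst p) (snd p))" "e > 0"
  shows "\<exists>d>0. \<forall>x. dist x a < d \<longrightarrow> (\<forall>z\<in>K. dist (F x z) (F a z) < e)"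
proof -
  have "uniformly_continuous_on (cball a r \<times> K) (\<lambda>p. F (fst p) (snd p))"
    using assms by (intro compact_uniformly_continuous compact_Times) auto
  then obtain d where d: "d > 0" "\<forall>p\<in>cball a r \<times> K. \<forall>p'\<in>cball a r \<times> K.
      dist p' p < d \<longrightarrow> dist (F (fst p') (snd p')) (F (fst p) (snd p)) < e"
    using \<open>e > 0\<close> unfolding uniformly_continuous_on_def by blast
  have "dist (F x z) (F a z) < e" if "dist x a < min d r" "z \<in> K" for x z
  proof -
    have "(x, z) \<in> cball a r \<times> K" "(a, z) \<in> cball a r \<times> K" "dist (x, z) (a, z) < d"
      using that \<open>r > 0\<close> by (auto simp: dist_commute dist_Pair_Pair)
    with d show ?thesis by fastforce
  qed
  then show ?thesis using d \<open>r > 0\<close> by (intro exI[of _ "min d r"]) auto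
qed

text \<open>The trace in the denominator of \<open>hol_map\<close> stays away from zero on the compact \<open>CP\<close>.\<close>

lemma hol_map_uniformly_close:
  assumes x0: "x0 \<in> hol_data" and "e > 0"
  shows "\<exists>d>0. \<forall>x. dist x x0 < d \<longrightarrow> (\<forall>Z\<in>CP. dist (hol_map x Z) (hol_map x0 Z) < e)"
proof -
  have "continuous_on CP (\<lambda>Z. norm (trace (hol_num x0 Z)))"
    unfolding hol_num_def mscale_def by (intro continuous_intros)
  then obtain Zm where Zm: "Zm \<in> CP" "\<forall>Z\<in>CP. norm (trace (hol_num x0 Zm)) \<le> norm (trace (hol_num x0 Z))"
    using continuous_attains_inf[OF compact_CP CP_nonempty] by blast
  define m where "m = norm (trace (hol_num x0 Zm))"
  have "m > 0" using hol_data_trace_nonzero[OF x0 Zm(1)] by (simp add: m_def)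
  have "continuous_on (cball x0 1 \<times> CP) (\<lambda>p. trace (hol_num (fst p) (snd p)))"
    by (intro continuous_intros continuous_on_hol_num)
  from uniformly_close_on_compact[OF compact_CP zero_less_one this, of "m / 2"] \<open>m > 0\<close>
  obtain d1 where d1: "d1 > 0"
    "\<forall>x. dist x x0 < d1 \<longrightarrow> (\<forall>Z\<in>CP. dist (trace (hol_num x Z)) (trace (hol_num x0 Z)) < m / 2)"
    by auto
  have nonzero: "trace (hol_num x Z) \<noteq> 0" if "dist x x0 < d1" "Z \<in> CP" for x Z
  proof
    assume "trace (hol_num x Z) = 0"
    moreover have "dist (trace (hol_num x Z)) (trace (hol_num x0 Z)) < m / 2"
      using d1(2) that by blast
    ultimately have "norm (trace (hol_num x0 Z)) < m / 2" by simp
    moreover have "m \<le> norm (trace (hol_num x0 Z))" using Zm that by (simp add: m_def)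
    ultimately show False using \<open>m > 0\<close> by simp
  qed
  have continuous: "continuous_on (cball x0 (d1 / 2) \<times> CP) (\<lambda>p. hol_map (fst p) (snd p))"
    unfolding hol_map_def mscale_def
  proof (intro continuous_intros continuous_on_hol_num ballI)
    fix p assume "p \<in> cball x0 (d1 / 2) \<times> (CP :: (complex^2^2) set)"
    then show "trace (hol_num (fst p) (snd p)) \<noteq> 0"
      using d1(1) by (intro nonzero) (auto simp: dist_commute)
  qed
  show ?thesis
    using uniformly_close_on_compact[OF compact_CP half_gt_zero[OF d1(1)] continuous \<open>e > 0\<close>] by blast
qed

lemma continuous_map_hol_fun:
  assumes \<phi>: "continuous_map X (top_of_set hol_data) \<phi>"
  shows "continuous_map X Hol1_top (\<lambda>y. hol_fun (\<phi> y))"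
proof (rule continuous_map_into_Hol1_top)
  have data: "\<phi> y \<in> hol_data" if "y \<in> topspace X" for y
    using \<phi> that unfolding continuous_map_def by auto
  then show "hol_fun (\<phi> y) \<in> Hol1" if "y \<in> topspace X" for y
    using that hol_fun_in_Hol1 by blast
  fix y and e :: real assume y: "y \<in> topspace X" and "e > 0"
  then obtain d where d: "d > 0"
    "\<forall>x. dist x (\<phi> y) < d \<longrightarrow> (\<forall>Z\<in>CP. dist (hol_map x Z) (hol_map (\<phi> y) Z) < e / 2)"
    using hol_map_uniformly_close[OF data, of y "e / 2"] by auto
  define U where "U = {x \<in> topspace X. \<phi> x \<in> hol_data \<inter> ball (\<phi> y) d}"
  have "openin X U" unfolding U_def
    by (rule openin_continuous_map_preimage[OF \<phi>]) (simp add: openin_open_Int)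
  moreover have "y \<in> U" using y data d by (simp add: U_def)
  moreover have "supdist (hol_fun (\<phi> y)) (hol_fun (\<phi> y')) < e" if "y' \<in> U" for y'
  proof -
    have "dist (\<phi> y') (\<phi> y) < d" using that by (simp add: U_def dist_commute)
    then have "dist (hol_map (\<phi> y') Z) (hol_map (\<phi> y) Z) < e / 2" if "Z \<in> CP" for Z
      using d(2) that by blast
    then have "supdist (hol_fun (\<phi> y)) (hol_fun (\<phi> y')) \<le> e / 2"
      by (intro supdist_le) (simp add: hol_fun_apply dist_commute less_imp_le)
    then show ?thesis using \<open>e > 0\<close> by simp
  qed
  ultimately show "\<exists>U. openin X U \<and> y \<in> U \<and> (\<forall>y'\<in>U. supdist (hol_fun (\<phi> y)) (hol_fun (\<phi> y')) < e)"
    by blast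
qed

subsection \<open>The fibrewise homotopy equivalence\<close>

lemma homotopic_with_restrict_fibre:
  fixes p :: "'a \<Rightarrow> 'b" and b :: 'b
  assumes "homotopic_with (\<lambda>k. \<forall>x\<in>topspace X. p (k x) = p x) X X f g"
  defines "F \<equiv> {x \<in> topspace X. p x = b}"
  shows "homotopic_with (\<lambda>_. True) (subtopology X F) (subtopology X F) f g"
proof -
  obtain H where H: "continuous_map (prod_topology (top_of_set {0..1::real}) X) X H"
    and ends: "\<forall>x. H (0, x) = f x" "\<forall>x. H (1, x) = g x"
    and fibrewise: "\<forall>t\<in>{0..1}. \<forall>x\<in>topspace X. p (H (t, x)) = p x"
    using assms(1) unfolding homotopic_with_def by blast
  have "H (t, x) \<in> F" if "t \<in> {0..1}" "x \<in> F" for t x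
    using that fibrewise continuous_map_image_subset_topspace[OF H] by (fastforce simp: F_def)
  then have "continuous_map (subtopology (prod_topology (top_of_set {0..1}) X) ({0..1} \<times> F))
      (subtopology X F) H"
    by (intro continuous_map_into_subtopology continuous_map_from_subtopology H) auto
  moreover have "subtopology (prod_topology (top_of_set {0..1}) X) ({0..1} \<times> F)
      = prod_topology (top_of_set {0..1::real}) (subtopology X F)"
    by (simp add: subtopology_Times subtopology_subtopology)
  ultimately have "continuous_map (prod_topology (top_of_set {0..1}) (subtopology X F)) (subtopology X F) H"
    by simp
  with ends show ?thesis unfolding homotopic_with_def by blast
qed

definition eval3 :: "('n::finite) P1_map \<Rightarrow> 'n cmat \<times> 'n cmat \<times> 'n cmat" where
  "eval3 h = (ev h, h point_01, h point_11)"

lemma eval3_normal_form: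
  fixes c :: complex and r :: real
  assumes vw: "orthonormal_pair v w" and "r > 0"
  defines "b \<equiv> c *s v + r *\<^sub>R w"
  shows "eval3 (hol_fun (outer v v, outer v b)) = (outer v v, proj b, proj (v + b))"
proof -
  have "cinner v v = 1" using vw by (simp add: orthonormal_pair_def)
  moreover have "cindep_pair v b"
    unfolding b_def using cindep_pair_orthogonal_decomposition[OF vw] \<open>r > 0\<close> by simp
  ultimately show ?thesis by (simp add: eval3_def hol_fun_values)
qed

lemma eval3_Hol1_nondegenerate:
  assumes "(P, Q, R) \<in> eval3 ` Hol1"
  shows "Re (1 - trace (R ** Q)) \<noteq> 0" "cross_of P Q R - cross_of P Q R ** P \<noteq> 0"
proof -
  obtain h where "h \<in> Hol1" and PQR: "(P, Q, R) = eval3 h" using assms by blast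
  obtain v w c r where vw: "orthonormal_pair v w" and "r > 0"
    and h: "h = hol_fun (outer v v, outer v (c *s v + r *\<^sub>R w))"
    using \<open>h \<in> Hol1\<close> by (rule Hol1_normal_form)
  define b where "b = c *s v + r *\<^sub>R w"
  have at_points: "P = outer v v" "Q = proj b" "R = proj (v + b)"
    using PQR eval3_normal_form[OF vw \<open>r > 0\<close>] by (simp_all add: h b_def)
  have "cinner v v = 1" "cindep_pair v b"
    using vw cindep_pair_orthogonal_decomposition[OF vw] \<open>r > 0\<close>
    by (simp_all add: orthonormal_pair_def b_def)
  then obtain t where "t > 0" "1 - trace (proj (v + b) ** proj b) = of_real t"
    using cross_of_values(1,2) by blast
  then show "Re (1 - trace (R ** Q)) \<noteq> 0" by (simp add: at_points)
  have "norm (outer v w) = 1"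
    using vw by (simp add: norm_outer orthonormal_pair_def cinner_self_eq_1_imp_norm)
  then show "cross_of P Q R - cross_of P Q R ** P \<noteq> 0"
    using unit_normal_values(1)[OF vw \<open>r > 0\<close>] \<open>r > 0\<close> by (auto simp: at_points b_def)
qed

lemma continuous_map_eval3: "continuous_map Hol1_top (top_of_set (eval3 ` Hol1)) eval3"
proof (rule continuous_map_into_subtopology)
  have "continuous_map Hol1_top (prod_topology euclidean (prod_topology euclidean euclidean))
      (\<lambda>h. (h (proj (axis 1 1)), h point_01, h point_11))"
    by (intro continuous_map_pairedI continuous_map_Hol1_eval points_in_CP)
  then show "continuous_map Hol1_top euclidean eval3" by (simp add: eval3_def[abs_def] ev_def)
qed auto

lemma continuous_on_cross_of [continuous_intros]:
  assumes "continuous_on S P" "continuous_on S Q" "continuous_on S R"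
    and "\<And>x. x \<in> S \<Longrightarrow> (P x, Q x, R x) \<in> eval3 ` Hol1"
  shows "continuous_on S (\<lambda>x. cross_of (P x) (Q x) (R x))"
  unfolding cross_of_def
  by (intro continuous_intros continuous_on_divide assms(1-3) ballI)
    (metis assms(4) eval3_Hol1_nondegenerate(1))

lemma continuous_on_unit_normal [continuous_intros]:
  assumes "continuous_on S P" "continuous_on S Q" "continuous_on S R"
    and "\<And>x. x \<in> S \<Longrightarrow> (P x, Q x, R x) \<in> eval3 ` Hol1"
  shows "continuous_on S (\<lambda>x. unit_normal (P x) (Q x) (R x))"
  unfolding unit_normal_def
  by (intro continuous_intros assms(1-3) ballI)
    (use assms(4) eval3_Hol1_nondegenerate(2) in blast)+

definition UTCP_to_Hol1 :: "('n::finite) cmat \<times> 'n cmat \<Rightarrow> 'n P1_map" where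
  "UTCP_to_Hol1 x = hol_fun (fst x, fst x ** snd x)"

definition tangent_of_values :: "('n::finite) cmat \<times> 'n cmat \<times> 'n cmat \<Rightarrow> 'n cmat \<times> 'n cmat" where
  "tangent_of_values = (\<lambda>(P, Q, R). (P, unit_normal P Q R + ctranspose (unit_normal P Q R)))"

definition Hol1_to_UTCP :: "('n::finite) P1_map \<Rightarrow> 'n cmat \<times> 'n cmat" where
  "Hol1_to_UTCP h = tangent_of_values (eval3 h)"

definition homotopy_data :: "real \<times> ('n::finite) cmat \<times> 'n cmat \<times> 'n cmat \<Rightarrow> 'n cmat \<times> 'n cmat" where
  "homotopy_data = (\<lambda>(t, P, Q, R). (P, (1 - t) *\<^sub>R unit_normal P Q R + t *\<^sub>R cross_of P Q R))"

definition Hol1_homotopy :: "real \<times> ('n::finite) P1_map \<Rightarrow> 'n P1_map" where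
  "Hol1_homotopy q = hol_fun (homotopy_data (fst q, eval3 (snd q)))"

lemma outer_frame_mult:
  assumes vw: "orthonormal_pair v w"
  shows "outer v v ** (outer w v + outer v w) = outer v w"
  using vw orthonormal_pair_cinner_swap[OF vw]
  by (simp add: matrix_add_ldistrib outer_mult orthonormal_pair_def)

lemma UTCP_to_Hol1_frame:
  assumes "orthonormal_pair v w"
  shows "UTCP_to_Hol1 (outer v v, outer w v + outer v w) = hol_fun (outer v v, outer v w)"
  by (simp add: UTCP_to_Hol1_def outer_frame_mult[OF assms])

lemma Hol1_to_UTCP_normal_form:
  assumes vw: "orthonormal_pair v w" and "r > 0"
  shows "Hol1_to_UTCP (hol_fun (outer v v, outer v (c *s v + r *\<^sub>R w)))
    = (outer v v, outer w v + outer v w)"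
  using unit_normal_values(2)[OF assms]
  by (simp add: Hol1_to_UTCP_def eval3_normal_form[OF assms] tangent_of_values_def ctranspose_outer
      add.commute)

lemma homotopy_data_normal_form:
  fixes c :: complex and r :: real
  assumes vw: "orthonormal_pair v w" and "r > 0"
  defines "b \<equiv> c *s v + r *\<^sub>R w"
  shows "homotopy_data (t, eval3 (hol_fun (outer v v, outer v b)))
    = (outer v v, outer v ((of_real t * c) *s v + (1 - t + t * r) *\<^sub>R w))"
proof -
  have "cinner v v = 1" "cindep_pair v b"
    using vw cindep_pair_orthogonal_decomposition[OF vw] \<open>r > 0\<close>
    by (simp_all add: orthonormal_pair_def b_def)
  then have "cross_of (outer v v) (proj b) (proj (v + b)) = outer v b"
    by (rule cross_of_values(3))
  moreover have "eval3 (hol_fun (outer v v, outer v b)) = (outer v v, proj b, proj (v + b))"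
    unfolding b_def by (rule eval3_normal_form[OF vw \<open>r > 0\<close>])
  moreover have "unit_normal (outer v v) (proj b) (proj (v + b)) = outer v w"
    unfolding b_def by (rule unit_normal_values(2)[OF vw \<open>r > 0\<close>])
  ultimately have "homotopy_data (t, eval3 (hol_fun (outer v v, outer v b)))
      = (outer v v, outer v ((1 - t) *\<^sub>R w + t *\<^sub>R b))"
    by (simp add: homotopy_data_def outer_add_right outer_scaleR_right)
  also have "(1 - t) *\<^sub>R w + t *\<^sub>R b = (of_real t * c) *s v + (1 - t + t * r) *\<^sub>R w"
    by (simp add: b_def vec_eq_iff scaleR_conv_of_real[where 'a=complex] algebra_simps)
  finally show ?thesis .
qed

lemma UTCP_frame_data:
  assumes "x \<in> UTCP"
  shows "(fst x, fst x ** snd x) \<in> hol_data"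
proof -
  obtain v w where vw: "orthonormal_pair v w" and x: "x = (outer v v, outer w v + outer v w)"
    using assms UTCP_imp_orthonormal_frame by (metis prod.collapse)
  have "cinner v v = 1" using vw by (simp add: orthonormal_pair_def)
  then show ?thesis
    unfolding hol_data_def x fst_conv snd_conv outer_frame_mult[OF vw]
    using orthonormal_pair_imp_cindep_pair[OF vw] by blast
qed

lemma UTCP_to_Hol1_props:
  assumes "x \<in> UTCP"
  shows "UTCP_to_Hol1 x \<in> Hol1" "ev (UTCP_to_Hol1 x) = fst x" "Hol1_to_UTCP (UTCP_to_Hol1 x) = x"
proof -
  obtain v w where vw: "orthonormal_pair v w" and x: "x = (outer v v, outer w v + outer v w)"
    using assms UTCP_imp_orthonormal_frame by (metis prod.collapse)
  have v: "cinner v v = 1" using vw by (simp add: orthonormal_pair_def)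
  note vw_indep = orthonormal_pair_imp_cindep_pair[OF vw]
  have f: "UTCP_to_Hol1 x = hol_fun (outer v v, outer v w)"
    unfolding x by (rule UTCP_to_Hol1_frame[OF vw])
  show "UTCP_to_Hol1 x \<in> Hol1"
    unfolding UTCP_to_Hol1_def using UTCP_frame_data[OF assms] by (rule hol_fun_in_Hol1)
  show "ev (UTCP_to_Hol1 x) = fst x"
    unfolding f using hol_fun_values(1)[OF v vw_indep] by (simp add: x)
  show "Hol1_to_UTCP (UTCP_to_Hol1 x) = x"
    unfolding f using Hol1_to_UTCP_normal_form[OF vw zero_less_one, of 0] by (simp add: x)
qed

lemma Hol1_to_UTCP_props:
  assumes "h \<in> Hol1"
  shows "Hol1_to_UTCP h \<in> UTCP" "fst (Hol1_to_UTCP h) = ev h"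
proof -
  obtain v w c r where vw: "orthonormal_pair v w" and "r > 0"
    and h: "h = hol_fun (outer v v, outer v (c *s v + r *\<^sub>R w))"
    using assms by (rule Hol1_normal_form)
  show "Hol1_to_UTCP h \<in> UTCP" "fst (Hol1_to_UTCP h) = ev h"
    using Hol1_to_UTCP_normal_form[OF vw \<open>r > 0\<close>] eval3_normal_form[OF vw \<open>r > 0\<close>]
      orthonormal_frame_in_UTCP[OF vw]
    by (simp_all add: h eval3_def)
qed

lemma Hol1_homotopy_props:
  assumes "h \<in> Hol1" "t \<in> {0..1}"
  shows "homotopy_data (t, eval3 h) \<in> hol_data" "ev (Hol1_homotopy (t, h)) = ev h"
proof -
  obtain v w c r where vw: "orthonormal_pair v w" and "r > 0"
    and h: "h = hol_fun (outer v v, outer v (c *s v + r *\<^sub>R w))"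
    using assms(1) by (rule Hol1_normal_form)
  have v: "cinner v v = 1" using vw by (simp add: orthonormal_pair_def)
  have "1 - t + t * r > 0" using assms(2) \<open>r > 0\<close>
    by (cases "t = 0") (auto intro: add_nonneg_pos simp: add_pos_nonneg)
  then have indep: "cindep_pair v ((of_real t * c) *s v + (1 - t + t * r) *\<^sub>R w)"
    using cindep_pair_orthogonal_decomposition[OF vw] by simp
  have data: "homotopy_data (t, eval3 h)
      = (outer v v, outer v ((of_real t * c) *s v + (1 - t + t * r) *\<^sub>R w))"
    unfolding h by (rule homotopy_data_normal_form[OF vw \<open>r > 0\<close>])
  then show "homotopy_data (t, eval3 h) \<in> hol_data"
    unfolding hol_data_def using v indep by blast
  have "ev h = outer v v"
    using hol_fun_values(1)[OF v cindep_pair_orthogonal_decomposition[OF vw, of r c]] \<open>r > 0\<close>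
    by (simp add: h)
  then show "ev (Hol1_homotopy (t, h)) = ev h"
    unfolding Hol1_homotopy_def fst_conv snd_conv data using hol_fun_values(1)[OF v indep] by simp
qed

lemma Hol1_homotopy_ends:
  assumes "h \<in> Hol1"
  shows "Hol1_homotopy (0, h) = UTCP_to_Hol1 (Hol1_to_UTCP h)" "Hol1_homotopy (1, h) = h"
proof -
  obtain v w c r where vw: "orthonormal_pair v w" and "r > 0"
    and h: "h = hol_fun (outer v v, outer v (c *s v + r *\<^sub>R w))"
    using assms by (rule Hol1_normal_form)
  show "Hol1_homotopy (0, h) = UTCP_to_Hol1 (Hol1_to_UTCP h)"
    using homotopy_data_normal_form[OF vw \<open>r > 0\<close>, where c = c and t = 0]
      Hol1_to_UTCP_normal_form[OF vw \<open>r > 0\<close>]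
    by (simp add: Hol1_homotopy_def h UTCP_to_Hol1_frame[OF vw])
  show "Hol1_homotopy (1, h) = h"
    using homotopy_data_normal_form[OF vw \<open>r > 0\<close>, where c = c and t = 1]
    by (simp add: Hol1_homotopy_def h)
qed

lemma continuous_map_UTCP_to_Hol1: "continuous_map (top_of_set UTCP) Hol1_top UTCP_to_Hol1"
proof -
  have "continuous_map (top_of_set UTCP) (top_of_set hol_data)
      (\<lambda>x :: ('n::finite) cmat \<times> 'n cmat. (fst x, fst x ** snd x))"
    by (intro continuous_map_into_subtopology) (auto simp: continuous_intros UTCP_frame_data)
  then show ?thesis
    unfolding UTCP_to_Hol1_def[abs_def] by (rule continuous_map_hol_fun)
qed

lemma continuous_map_Hol1_to_UTCP: "continuous_map Hol1_top (top_of_set UTCP) Hol1_to_UTCP"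
proof (rule continuous_map_into_subtopology)
  have "continuous_map (top_of_set (eval3 ` Hol1)) euclidean tangent_of_values"
    unfolding continuous_map_iff_continuous tangent_of_values_def case_prod_unfold
    by (intro continuous_intros) auto
  then show "continuous_map Hol1_top euclidean Hol1_to_UTCP"
    unfolding Hol1_to_UTCP_def[abs_def]
    by (rule continuous_map_compose[OF continuous_map_eval3, unfolded o_def])
qed (auto simp: Hol1_to_UTCP_props)

lemma continuous_map_Hol1_homotopy:
  "continuous_map (prod_topology (top_of_set {0..1}) Hol1_top) Hol1_top Hol1_homotopy"
proof -
  let ?X = "prod_topology (top_of_set {0..1::real}) Hol1_top"
  have "continuous_map ?X (top_of_set ({0..1} \<times> eval3 ` Hol1)) (\<lambda>q. (fst q, eval3 (snd q)))"
  proof (rule continuous_map_into_subtopology)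
    have "continuous_map ?X euclidean fst"
      by (rule continuous_map_into_fulltopology[OF continuous_map_fst])
    moreover have "continuous_map ?X euclidean (\<lambda>q. eval3 (snd q))"
      using continuous_map_into_fulltopology[OF continuous_map_compose[OF continuous_map_snd
          continuous_map_eval3]]
      by (simp add: o_def)
    ultimately have "continuous_map ?X (prod_topology euclidean euclidean) (\<lambda>q. (fst q, eval3 (snd q)))"
      by (rule continuous_map_pairedI)
    then show "continuous_map ?X euclidean (\<lambda>q. (fst q, eval3 (snd q)))" by simp
  qed auto
  moreover have "continuous_map (top_of_set ({0..1} \<times> eval3 ` Hol1)) euclidean homotopy_data"
    unfolding continuous_map_iff_continuous homotopy_data_def case_prod_unfold
    by (intro continuous_intros) auto
  ultimately have "continuous_map ?X euclidean (\<lambda>q. homotopy_data (fst q, eval3 (snd q)))"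
    by (rule continuous_map_compose[unfolded o_def])
  then have "continuous_map ?X (top_of_set hol_data) (\<lambda>q. homotopy_data (fst q, eval3 (snd q)))"
    by (rule continuous_map_into_subtopology) (auto simp: Hol1_homotopy_props(1))
  then show ?thesis
    unfolding Hol1_homotopy_def[abs_def] by (rule continuous_map_hol_fun)
qed

lemma homotopic_UTCP_roundtrip:
  "homotopic_with (\<lambda>k. \<forall>x\<in>UTCP. fst (k x) = fst x) (top_of_set UTCP) (top_of_set UTCP)
    (Hol1_to_UTCP \<circ> UTCP_to_Hol1) id"
  by (rule homotopic_with_equal)
    (auto simp: UTCP_to_Hol1_props intro: continuous_map_compose continuous_map_UTCP_to_Hol1
      continuous_map_Hol1_to_UTCP)

lemma homotopic_Hol1_roundtrip:
  "homotopic_with (\<lambda>k. \<forall>h\<in>Hol1. ev (k h) = ev h) Hol1_top Hol1_top (UTCP_to_Hol1 \<circ> Hol1_to_UTCP) id"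
proof (subst homotopic_with, goal_cases)
  case 2
  show ?case
    by (intro exI[of _ Hol1_homotopy] conjI ballI)
      (auto simp: continuous_map_Hol1_homotopy Hol1_homotopy_props Hol1_homotopy_ends)
qed simp

theorem lemma2p1:
  fixes i0 :: "'n::finite"
  assumes "CARD('n) \<ge> 2"
  shows "\<exists>(f :: (complex^'n^'n) \<times> (complex^'n^'n) \<Rightarrow> ((complex^2^2) \<Rightarrow> (complex^'n^'n)))
           (g :: ((complex^2^2) \<Rightarrow> (complex^'n^'n)) \<Rightarrow> (complex^'n^'n) \<times> (complex^'n^'n)).
     continuous_map (top_of_set UTCP) Hol1_top f \<and>
     continuous_map Hol1_top (top_of_set UTCP) g \<and>
     (\<forall>x\<in>UTCP. ev (f x) = fst x) \<and>
     (\<forall>h\<in>Hol1. fst (g h) = ev h) \<and>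
     homotopic_with (\<lambda>k. \<forall>x\<in>UTCP. fst (k x) = fst x)
        (top_of_set UTCP) (top_of_set UTCP) (g \<circ> f) id \<and>
     homotopic_with (\<lambda>k. \<forall>h\<in>Hol1. ev (k h) = ev h)
        Hol1_top Hol1_top (f \<circ> g) id \<and>
     (let b = proj (axis i0 1 :: complex^'n);
          F = {x\<in>UTCP. fst x = b};
          R = {h\<in>Hol1. ev h = b}
      in f ` F \<subseteq> R \<and> g ` R \<subseteq> F \<and>
         homotopic_with (\<lambda>_. True) (subtopology (top_of_set UTCP) F)
            (subtopology (top_of_set UTCP) F) (g \<circ> f) id \<and>
         homotopic_with (\<lambda>_. True) (subtopology Hol1_top R)
            (subtopology Hol1_top R) (f \<circ> g) id)"
proof -
  note gf = homotopic_UTCP_roundtrip and fg = homotopic_Hol1_roundtrip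
  define b where "b = proj (axis i0 1 :: complex^'n)"
  have "homotopic_with (\<lambda>_. True) (subtopology (top_of_set UTCP) {x\<in>UTCP. fst x = b})
      (subtopology (top_of_set UTCP) {x\<in>UTCP. fst x = b}) (Hol1_to_UTCP \<circ> UTCP_to_Hol1) id"
    using homotopic_with_restrict_fibre[of "top_of_set UTCP" fst, of _ _ b] gf by simp
  moreover have "homotopic_with (\<lambda>_. True) (subtopology Hol1_top {h\<in>Hol1. ev h = b})
      (subtopology Hol1_top {h\<in>Hol1. ev h = b}) (UTCP_to_Hol1 \<circ> Hol1_to_UTCP) id"
    using homotopic_with_restrict_fibre[of Hol1_top ev, of _ _ b] fg by simp
  ultimately show ?thesis
    unfolding Let_def b_def[symmetric]
    using UTCP_to_Hol1_props Hol1_to_UTCP_props gf fg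
    by (intro exI[of _ UTCP_to_Hol1] exI[of _ Hol1_to_UTCP] conjI continuous_map_UTCP_to_Hol1
        continuous_map_Hol1_to_UTCP) auto
qed

end
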